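(* In the setting described in the context, every feasible solution $(\alpha,c,u,\pi,\lambda,\mu)$ of RLO-IU-SD satisfies, for some $\hat{i}\in I$, \[ \sum_{j\in J}a_{\hat{i}j}\hat{x}_j-\sum_{j\in J_{\hat{i}}}\alpha_{\hat{i}j}|\hat{x}_j|=b_{\hat{i}},\quad \sum_{j\in J}a_{ij}\hat{x}_j-\sum_{j\in J_i}\alpha_{ij}|\hat{x}_j|\ge b_i\ \ \forall i\in I,\quad \alpha_{ij}\ge0\ \ \forall j\in J_i,i\in I. \] Conversely, for every $\alpha$ satisfying these three conditions for some $\hat{i}\in I$, there exists $(c,u,\pi,\lambda,\mu)$ such that $(\alpha,c,u,\pi,\lambda,\mu)$ is feasible for RLO-IU-SD.
   Context: Let $I=\{1,\dots,m\}$, $J=\{1,\dots,n\}$. Given are $a_{ij}\in\mathbb{R}$, $b\in\mathbb{R}^m$, nonempty index sets $J_i\subseteq J$ ($i\in I$), an observed point $\hat{x}\in\mathbb{R}^n$, prior vectors $\hat{\alpha}_i\in\mathbb{R}^{|J_i|}$, real weights $\xi_i$, and a norm $\|\cdot\|$. The problem RLO-IU-SD is \[ \min_{\alpha,c,u,\pi,\lambda,\mu}\ \sum_{i\in I}\xi_i\|\alpha_i-\hat{\alpha}_i\| \] subject to: $\sum_{j\in J}c_j\hat{x}_j-\sum_{i\in I}b_i\pi_i=0$; $\alpha_{ij}\hat{x}_j+u_{ij}\ge0$ and $-\alpha_{ij}\hat{x}_j+u_{ij}\ge0$ for all $j\in J_i,i\in I$; $\sum_{j\in J}a_{ij}\hat{x}_j-\sum_{j\in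 J_i}u_{ij}\ge b_i$ for all $i\in I$; $\alpha_{ij}\ge0$ for all $j\in J_i,i\in I$; $\sum_{i\in I}\pi_i=1$; $\sum_{i\in I}a_{ij}\pi_i+\sum_{i\in I:j\in J_i}\alpha_{ij}(\lambda_{ij}-\mu_{ij})=c_j$ for all $j\in J$; $\pi_i=\lambda_{ij}+\mu_{ij}$ for all $j\in J_i,i\in I$; $\pi_i,\lambda_{ij},\mu_{ij}\ge0$ for all $j\in J_i,i\in I$. Here $\alpha_i=(\alpha_{ij})_{j\in J_i}$, $c\in\mathbb{R}^n$, $\pi\in\mathbb{R}^m$. *)

theory Defs
  imports "HOL-Analysis.Analysis"
begin

text \<open>Feasible set of RLO-IU-SD. Index sets I = {1..m}, J = {1..n}; Js i is J_i.
  Vectors/matrices are functions on nat, only their values on the relevant index sets matter.\<close>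

definition rlo_iu_sd_feasible ::
  "nat \<Rightarrow> nat \<Rightarrow> (nat \<Rightarrow> nat \<Rightarrow> real) \<Rightarrow> (nat \<Rightarrow> real) \<Rightarrow> (nat \<Rightarrow> nat set) \<Rightarrow> (nat \<Rightarrow> real)
   \<Rightarrow> (nat \<Rightarrow> nat \<Rightarrow> real) \<Rightarrow> (nat \<Rightarrow> real) \<Rightarrow> (nat \<Rightarrow> nat \<Rightarrow> real) \<Rightarrow> (nat \<Rightarrow> real)
   \<Rightarrow> (nat \<Rightarrow> nat \<Rightarrow> real) \<Rightarrow> (nat \<Rightarrow> nat \<Rightarrow> real) \<Rightarrow> bool" where
  "rlo_iu_sd_feasible m n a b Js xh \<alpha> c u \<pi> lam \<mu> \<longleftrightarrow>
     (\<Sum>j\<in>{1..n}. c j * xh j) - (\<Sum>i\<in>{1..m}. b i * \<pi> i) = 0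
   \<and> (\<forall>i\<in>{1..m}. \<forall>j\<in>Js i. \<alpha> i j * xh j + u i j \<ge> 0 \<and> - \<alpha> i j * xh j + u i j \<ge> 0)
   \<and> (\<forall>i\<in>{1..m}. (\<Sum>j\<in>{1..n}. a i j * xh j) - (\<Sum>j\<in>Js i. u i j) \<ge> b i)
   \<and> (\<forall>i\<in>{1..m}. \<forall>j\<in>Js i. \<alpha> i j \<ge> 0)
   \<and> (\<Sum>i\<in>{1..m}. \<pi> i) = 1
   \<and> (\<forall>j\<in>{1..n}. (\<Sum>i\<in>{1..m}. a i j * \<pi> i)
          + (\<Sum>i\<in>{i\<in>{1..m}. j \<in> Js i}. \<alpha> i j * (lam i j - \<mu> i j)) = c j)
   \<and> (\<forall>i\<in>{1..m}. \<forall>j\<in>Js i. \<pi> i = lam i j + \<mu> i j)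
   \<and> (\<forall>i\<in>{1..m}. \<pi> i \<ge> 0)
   \<and> (\<forall>i\<in>{1..m}. \<forall>j\<in>Js i. lam i j \<ge> 0 \<and> \<mu> i j \<ge> 0)"

end

theory Submission
  imports Defs
begin

text \<open>Eliminating \<open>u\<close> shows that the row value under the worst-case perturbation,
  \<open>a\<^sub>i x - \<Sum>\<^sub>j \<alpha>\<^sub>i\<^sub>j |x\<^sub>j|\<close>, is at least \<open>b\<^sub>i\<close>. Substituting \<open>c\<close> into strong duality and
  using \<open>|\<lambda>\<^sub>i\<^sub>j - \<mu>\<^sub>i\<^sub>j| \<le> \<pi>\<^sub>i\<close> gives \<open>\<Sum>\<^sub>i \<pi>\<^sub>i (row value) \<le> \<Sum>\<^sub>i \<pi>\<^sub>i b\<^sub>i\<close>; since \<open>\<pi>\<close> is a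
  probability vector, some row with \<open>\<pi>\<^sub>i > 0\<close> must be binding. Conversely, for a binding row
  \<open>i\<close> put all dual weight on it and split it into \<open>\<lambda>\<close>, \<open>\<mu>\<close> according to the sign of \<open>x\<^sub>j\<close>.\<close>

definition robust_row ::
  "nat \<Rightarrow> (nat \<Rightarrow> nat \<Rightarrow> real) \<Rightarrow> (nat \<Rightarrow> nat set) \<Rightarrow> (nat \<Rightarrow> real) \<Rightarrow> (nat \<Rightarrow> nat \<Rightarrow> real)
   \<Rightarrow> nat \<Rightarrow> real" where
  "robust_row n a Js xh \<alpha> i = (\<Sum>j\<in>{1..n}. a i j * xh j) - (\<Sum>j\<in>Js i. \<alpha> i j * \<bar>xh j\<bar>)"

definition robust_binding ::
  "nat \<Rightarrow> nat \<Rightarrow> (nat \<Rightarrow> nat \<Rightarrow> real) \<Rightarrow> (nat \<Rightarrow> real) \<Rightarrow> (nat \<Rightarrow> nat set) \<Rightarrow> (nat \<Rightarrow> real)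
   \<Rightarrow> (nat \<Rightarrow> nat \<Rightarrow> real) \<Rightarrow> bool" where
  "robust_binding m n a b Js xh \<alpha> \<longleftrightarrow>
     (\<exists>ih\<in>{1..m}. robust_row n a Js xh \<alpha> ih = b ih
        \<and> (\<forall>i\<in>{1..m}. robust_row n a Js xh \<alpha> i \<ge> b i)
        \<and> (\<forall>i\<in>{1..m}. \<forall>j\<in>Js i. \<alpha> i j \<ge> 0))"

lemma sum_swap_subsets:
  fixes f :: "'i \<Rightarrow> 'j \<Rightarrow> 'a::comm_monoid_add"
  assumes "finite I" "finite J" "\<forall>i\<in>I. Js i \<subseteq> J"
  shows "(\<Sum>j\<in>J. \<Sum>i\<in>{i\<in>I. j \<in> Js i}. f i j) = (\<Sum>i\<in>I. \<Sum>j\<in>Js i. f i j)"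
proof -
  have "(\<Sum>j\<in>J. \<Sum>i\<in>{i\<in>I. j \<in> Js i}. f i j) = (\<Sum>i\<in>I. \<Sum>j\<in>{j\<in>J. j \<in> Js i}. f i j)"
    by (rule sum.swap_restrict) (use assms in auto)
  also have "\<dots> = (\<Sum>i\<in>I. \<Sum>j\<in>Js i. f i j)"
    using assms(3) by (intro sum.cong refl) blast
  finally show ?thesis .
qed

lemma dual_objective_expand:
  fixes m n :: nat and xh :: "nat \<Rightarrow> real"
  assumes Js_sub: "\<forall>i\<in>{1..m}. Js i \<subseteq> {1..n}"
    and c: "\<forall>j\<in>{1..n}. c j = (\<Sum>i\<in>{1..m}. a i j * \<pi> i)
              + (\<Sum>i\<in>{i\<in>{1..m}. j \<in> Js i}. \<alpha> i j * (lam i j - \<mu> i j))"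
  shows "(\<Sum>j\<in>{1..n}. c j * xh j) = (\<Sum>i\<in>{1..m}. \<pi> i * (\<Sum>j\<in>{1..n}. a i j * xh j)
           + (\<Sum>j\<in>Js i. \<alpha> i j * (lam i j - \<mu> i j) * xh j))"
proof -
  have "(\<Sum>j\<in>{1..n}. c j * xh j) = (\<Sum>j\<in>{1..n}. \<Sum>i\<in>{1..m}. a i j * \<pi> i * xh j)
        + (\<Sum>j\<in>{1..n}. \<Sum>i\<in>{i\<in>{1..m}. j \<in> Js i}. \<alpha> i j * (lam i j - \<mu> i j) * xh j)"
    using c by (simp add: distrib_right sum.distrib sum_distrib_right)
  also have "\<dots> = (\<Sum>i\<in>{1..m}. \<pi> i * (\<Sum>j\<in>{1..n}. a i j * xh j))
        + (\<Sum>i\<in>{1..m}. \<Sum>j\<in>Js i. \<alpha> i j * (lam i j - \<mu> i j) * xh j)"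
    by (subst sum.swap, subst sum_swap_subsets[OF _ _ Js_sub])
      (simp_all add: sum_distrib_left algebra_simps)
  finally show ?thesis by (simp add: sum.distrib)
qed

lemma split_weight_lower_bound:
  fixes \<alpha> l \<mu> x :: real
  assumes "\<alpha> \<ge> 0" "l \<ge> 0" "\<mu> \<ge> 0"
  shows "\<alpha> * (l - \<mu>) * x \<ge> - ((l + \<mu>) * (\<alpha> * \<bar>x\<bar>))"
proof -
  have "\<bar>(l - \<mu>) * x\<bar> \<le> (l + \<mu>) * \<bar>x\<bar>"
    using assms by (simp add: abs_mult mult_right_mono)
  then have "- ((l + \<mu>) * \<bar>x\<bar>) \<le> (l - \<mu>) * x" by linarith
  from mult_left_mono[OF this assms(1)] show ?thesis by (simp add: algebra_simps)
qed

lemma convex_combination_tight: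
  fixes w t b :: "'i \<Rightarrow> real"
  assumes "finite I" "\<forall>i\<in>I. w i \<ge> 0" "sum w I = 1" "\<forall>i\<in>I. t i \<ge> b i"
    and "(\<Sum>i\<in>I. w i * t i) \<le> (\<Sum>i\<in>I. w i * b i)"
  shows "\<exists>i\<in>I. t i = b i"
proof -
  have nonneg: "\<forall>i\<in>I. 0 \<le> w i * (t i - b i)"
    using assms(2,4) by simp
  have "(\<Sum>i\<in>I. w i * (t i - b i)) \<le> 0"
    using assms(5) by (simp add: right_diff_distrib sum_subtractf)
  then have "(\<Sum>i\<in>I. w i * (t i - b i)) = 0"
    using nonneg by (meson antisym sum_nonneg)
  then have zero: "\<forall>i\<in>I. w i * (t i - b i) = 0"
    using assms(1) nonneg by (simp add: sum_nonneg_eq_0_iff)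
  obtain i where "i \<in> I" "w i \<noteq> 0"
    using assms(3) by (metis sum.neutral zero_neq_one)
  with zero show ?thesis by auto
qed

lemma feasible_imp_robust_binding:
  assumes Js_sub: "\<forall>i\<in>{1..m}. Js i \<subseteq> {1..n}"
    and F: "rlo_iu_sd_feasible m n a b Js xh \<alpha> c u \<pi> lam \<mu>"
  shows "robust_binding m n a b Js xh \<alpha>"
proof -
  note D = F[unfolded rlo_iu_sd_feasible_def]
  let ?t = "robust_row n a Js xh \<alpha>"
  have u_ge: "\<alpha> i j * \<bar>xh j\<bar> \<le> u i j" if "i \<in> {1..m}" "j \<in> Js i" for i j
  proof -
    have "\<alpha> i j * xh j + u i j \<ge> 0" "- \<alpha> i j * xh j + u i j \<ge> 0" "\<alpha> i j \<ge> 0"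
      using D that by auto
    then show ?thesis by (cases "xh j \<ge> 0") (auto simp: abs_if)
  qed
  have row_ge: "\<forall>i\<in>{1..m}. ?t i \<ge> b i"
  proof
    fix i assume i: "i \<in> {1..m}"
    have "(\<Sum>j\<in>Js i. \<alpha> i j * \<bar>xh j\<bar>) \<le> (\<Sum>j\<in>Js i. u i j)"
      using u_ge i by (intro sum_mono) auto
    then show "?t i \<ge> b i" using D i unfolding robust_row_def by fastforce
  qed
  have "(\<Sum>i\<in>{1..m}. \<pi> i * ?t i) \<le> (\<Sum>i\<in>{1..m}. \<pi> i * (\<Sum>j\<in>{1..n}. a i j * xh j)
           + (\<Sum>j\<in>Js i. \<alpha> i j * (lam i j - \<mu> i j) * xh j))"
  proof (rule sum_mono)
    fix i assume i: "i \<in> {1..m}"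
    have "(\<Sum>j\<in>Js i. - (\<pi> i * (\<alpha> i j * \<bar>xh j\<bar>))) \<le> (\<Sum>j\<in>Js i. \<alpha> i j * (lam i j - \<mu> i j) * xh j)"
    proof (rule sum_mono)
      fix j assume j: "j \<in> Js i"
      have "\<pi> i = lam i j + \<mu> i j" "\<alpha> i j \<ge> 0" "lam i j \<ge> 0" "\<mu> i j \<ge> 0"
        using D i j by auto
      then show "- (\<pi> i * (\<alpha> i j * \<bar>xh j\<bar>)) \<le> \<alpha> i j * (lam i j - \<mu> i j) * xh j"
        by (simp add: split_weight_lower_bound)
    qed
    then show "\<pi> i * ?t i \<le> \<pi> i * (\<Sum>j\<in>{1..n}. a i j * xh j)
           + (\<Sum>j\<in>Js i. \<alpha> i j * (lam i j - \<mu> i j) * xh j)"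
      unfolding robust_row_def by (simp add: sum_negf sum_distrib_left[symmetric] right_diff_distrib)
  qed
  also have "\<dots> = (\<Sum>j\<in>{1..n}. c j * xh j)"
    using D by (intro dual_objective_expand[OF Js_sub, symmetric]) auto
  also have "\<dots> = (\<Sum>i\<in>{1..m}. \<pi> i * b i)"
    using D by (simp add: mult.commute)
  finally have "\<exists>i\<in>{1..m}. ?t i = b i"
    using D row_ge by (intro convex_combination_tight) auto
  then show ?thesis
    using row_ge D unfolding robust_binding_def by blast
qed

lemma robust_binding_imp_feasible:
  assumes Js_sub: "\<forall>i\<in>{1..m}. Js i \<subseteq> {1..n}"
    and R: "robust_binding m n a b Js xh \<alpha>"
  shows "\<exists>c u \<pi> lam \<mu>. rlo_iu_sd_feasible m n a b Js xh \<alpha> c u \<pi> lam \<mu>"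
proof -
  obtain ih where ih: "ih \<in> {1..m}" and binding: "robust_row n a Js xh \<alpha> ih = b ih"
    and row_ge: "\<forall>i\<in>{1..m}. robust_row n a Js xh \<alpha> i \<ge> b i"
    and nonneg: "\<forall>i\<in>{1..m}. \<forall>j\<in>Js i. \<alpha> i j \<ge> 0"
    using R unfolding robust_binding_def by blast
  define \<pi> :: "nat \<Rightarrow> real" where "\<pi> i = (if i = ih then 1 else 0)" for i
  define u where "u i j = \<alpha> i j * \<bar>xh j\<bar>" for i j
  define lam :: "nat \<Rightarrow> nat \<Rightarrow> real" where "lam i j = (if i = ih \<and> xh j < 0 then 1 else 0)" for i j
  define \<mu> :: "nat \<Rightarrow> nat \<Rightarrow> real" where "\<mu> i j = (if i = ih \<and> xh j \<ge> 0 then 1 else 0)" for i j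
  define c where "c j = (\<Sum>i\<in>{1..m}. a i j * \<pi> i)
          + (\<Sum>i\<in>{i\<in>{1..m}. j \<in> Js i}. \<alpha> i j * (lam i j - \<mu> i j))" for j
  have "\<alpha> i j * (lam i j - \<mu> i j) * xh j = (if i = ih then - (\<alpha> i j * \<bar>xh j\<bar>) else 0)" for i j
    by (auto simp: lam_def \<mu>_def abs_if)
  then have row: "\<pi> i * (\<Sum>j\<in>{1..n}. a i j * xh j) + (\<Sum>j\<in>Js i. \<alpha> i j * (lam i j - \<mu> i j) * xh j)
        = (if i = ih then robust_row n a Js xh \<alpha> i else 0)" for i
    by (simp add: \<pi>_def robust_row_def sum_negf)
  have "\<forall>j\<in>{1..n}. c j = (\<Sum>i\<in>{1..m}. a i j * \<pi> i)
          + (\<Sum>i\<in>{i\<in>{1..m}. j \<in> Js i}. \<alpha> i j * (lam i j - \<mu> i j))"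
    by (simp add: c_def)
  from dual_objective_expand[OF Js_sub this, of xh, unfolded row]
  have "(\<Sum>j\<in>{1..n}. c j * xh j) = robust_row n a Js xh \<alpha> ih"
    using ih by simp
  also have "\<dots> = (\<Sum>i\<in>{1..m}. b i * \<pi> i)"
    using ih binding by (simp add: \<pi>_def if_distrib sum.If_cases)
  finally have objective: "(\<Sum>j\<in>{1..n}. c j * xh j) - (\<Sum>i\<in>{1..m}. b i * \<pi> i) = 0"
    by simp
  have "rlo_iu_sd_feasible m n a b Js xh \<alpha> c u \<pi> lam \<mu>"
    unfolding rlo_iu_sd_feasible_def
  proof (intro conjI objective)
    show "\<forall>i\<in>{1..m}. \<forall>j\<in>Js i. \<alpha> i j * xh j + u i j \<ge> 0 \<and> - \<alpha> i j * xh j + u i j \<ge> 0"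
      using nonneg by (auto simp: u_def abs_if mult_nonneg_nonpos)
    show "\<forall>i\<in>{1..m}. (\<Sum>j\<in>{1..n}. a i j * xh j) - (\<Sum>j\<in>Js i. u i j) \<ge> b i"
      using row_ge by (simp add: u_def robust_row_def)
    show "(\<Sum>i\<in>{1..m}. \<pi> i) = 1"
      using ih by (simp add: \<pi>_def sum.If_cases)
    show "\<forall>i\<in>{1..m}. \<forall>j\<in>Js i. \<pi> i = lam i j + \<mu> i j"
      by (simp add: \<pi>_def lam_def \<mu>_def)
  qed (simp_all add: nonneg c_def \<pi>_def lam_def \<mu>_def)
  then show ?thesis by blast
qed

theorem lemma4:
  fixes m n :: nat and a :: "nat \<Rightarrow> nat \<Rightarrow> real" and b :: "nat \<Rightarrow> real"
    and Js :: "nat \<Rightarrow> nat set" and xh :: "nat \<Rightarrow> real"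
  assumes Js_sub: "\<forall>i\<in>{1..m}. Js i \<subseteq> {1..n}"
    and Js_ne: "\<forall>i\<in>{1..m}. Js i \<noteq> {}"
  shows "(\<forall>\<alpha> c u \<pi> lam \<mu>. rlo_iu_sd_feasible m n a b Js xh \<alpha> c u \<pi> lam \<mu> \<longrightarrow>
            (\<exists>ih\<in>{1..m}.
               (\<Sum>j\<in>{1..n}. a ih j * xh j) - (\<Sum>j\<in>Js ih. \<alpha> ih j * \<bar>xh j\<bar>) = b ih
             \<and> (\<forall>i\<in>{1..m}. (\<Sum>j\<in>{1..n}. a i j * xh j) - (\<Sum>j\<in>Js i. \<alpha> i j * \<bar>xh j\<bar>) \<ge> b i)
             \<and> (\<forall>i\<in>{1..m}. \<forall>j\<in>Js i. \<alpha> i j \<ge> 0)))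
       \<and> (\<forall>\<alpha>. (\<exists>ih\<in>{1..m}.
               (\<Sum>j\<in>{1..n}. a ih j * xh j) - (\<Sum>j\<in>Js ih. \<alpha> ih j * \<bar>xh j\<bar>) = b ih
             \<and> (\<forall>i\<in>{1..m}. (\<Sum>j\<in>{1..n}. a i j * xh j) - (\<Sum>j\<in>Js i. \<alpha> i j * \<bar>xh j\<bar>) \<ge> b i)
             \<and> (\<forall>i\<in>{1..m}. \<forall>j\<in>Js i. \<alpha> i j \<ge> 0))
            \<longrightarrow> (\<exists>c u \<pi> lam \<mu>. rlo_iu_sd_feasible m n a b Js xh \<alpha> c u \<pi> lam \<mu>))"
  using feasible_imp_robust_binding[OF Js_sub] robust_binding_imp_feasible[OF Js_sub]
  unfolding robust_binding_def robust_row_def by (intro conjI allI impI) blast+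

end
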